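(* The space $\tilde D$ with the metric $d_{\tilde D}$ is separable and complete.
   Context: $D=D([0,1],\mathbb R^d)$ is the space of càdlàg functions on $[0,1]$. $\tilde D=D/\!\sim$, where $x\sim y$ iff $x\circ\lambda=y$ for some continuous strictly increasing bijection $\lambda:[0,1]\to[0,1]$, and $d_{\tilde D}([x],[y])=\inf_\lambda\|x\circ\lambda-y\|_\infty$, the infimum over all such $\lambda$. *)

theory Defs
  imports "HOL-Analysis.Analysis"
begin

text \<open>Functions are total on real; only their values on [0,1] are relevant, since the
  equivalence relation below only compares values on [0,1].\<close>

definition cadlag :: "(real \<Rightarrow> 'a::real_normed_vector) \<Rightarrow> bool" where
  "cadlag x \<longleftrightarrow>
     (\<forall>t\<in>{0..<1}. (x \<longlongrightarrow> x t) (at_right t)) \<and>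
     (\<forall>t\<in>{0<..1}. \<exists>l. (x \<longlongrightarrow> l) (at_left t))"

definition Dspace :: "(real \<Rightarrow> 'a::real_normed_vector) set" where
  "Dspace = {x. cadlag x}"

definition time_changes :: "(real \<Rightarrow> real) set" where
  "time_changes = {l. continuous_on {0..1} l \<and> strict_mono_on {0..1} l
                        \<and> bij_betw l {0..1} {0..1}}"

definition Drel :: "((real \<Rightarrow> 'a::real_normed_vector) \<times> (real \<Rightarrow> 'a)) set" where
  "Drel = {(x, y). x \<in> Dspace \<and> y \<in> Dspace \<and>
                   (\<exists>l\<in>time_changes. \<forall>t\<in>{0..1}. x (l t) = y t)}"

definition Dtilde :: "(real \<Rightarrow> 'a::real_normed_vector) set set" where
  "Dtilde = Dspace // Drel"

definition dD :: "(real \<Rightarrow> 'a::real_normed_vector) \<Rightarrow> (real \<Rightarrow> 'a) \<Rightarrow> real" where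
  "dD x y = Inf ((\<lambda>l. SUP t\<in>{0..1}. norm (x (l t) - y t)) ` time_changes)"

definition dDtilde :: "(real \<Rightarrow> 'a::real_normed_vector) set \<Rightarrow> (real \<Rightarrow> 'a) set \<Rightarrow> real" where
  "dDtilde A B = Inf {dD x y | x y. x \<in> A \<and> y \<in> B}"

end

theory Submission
  imports Defs
begin

text \<open>A cadlag function is uniformly approximable by step functions with finitely many
  jumps, by a continuous induction along [0,1]. Since time changes can move finitely many jump
  points anywhere, in particular to rationals, the classes of step functions with rational jumps
  and values in a countable dense set are dense. For completeness, a Cauchy sequence of classes has
  a subsequence with representatives that are successively uniformly $2^{-k}$-close (classes are
  closed under time changes, so the time change can always be moved onto the next representative);
  their uniform limit is cadlag and its class is the limit.\<close>

section \<open>Time changes\<close>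

lemma time_changesD:
  assumes "l \<in> time_changes"
  shows "continuous_on {0..1} l" "strict_mono_on {0..1} l" "bij_betw l {0..1} {0..1}"
  using assms unfolding time_changes_def by auto

lemma time_change_in_unit: "l \<in> time_changes \<Longrightarrow> t \<in> {0..1} \<Longrightarrow> l t \<in> {0..1}"
  using time_changesD(3) bij_betwE by blast

lemma time_change_less_iff:
  "l \<in> time_changes \<Longrightarrow> s \<in> {0..1} \<Longrightarrow> t \<in> {0..1} \<Longrightarrow> l s < l t \<longleftrightarrow> s < t"
  by (rule strict_mono_on_less[OF time_changesD(2)])

lemma time_change_le_iff:
  "l \<in> time_changes \<Longrightarrow> s \<in> {0..1} \<Longrightarrow> t \<in> {0..1} \<Longrightarrow> l s \<le> l t \<longleftrightarrow> s \<le> t"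
  by (rule strict_mono_on_less_eq[OF time_changesD(2)])

lemma time_change_0_1:
  assumes l: "l \<in> time_changes"
  shows "l 0 = 0" "l 1 = 1"
proof -
  have onto: "l ` {0..1} = {0..1}" using time_changesD(3)[OF l] by (simp add: bij_betw_def)
  have "0 \<in> l ` {0..1}" "1 \<in> l ` {0..1}" unfolding onto by auto
  then obtain s u where "s \<in> {0..1}" "0 = l s" "u \<in> {0..1}" "1 = l u" by (elim imageE)
  then show "l 0 = 0" "l 1 = 1"
    using time_change_le_iff[OF l, of 0 s] time_change_le_iff[OF l, of u 1]
      time_change_in_unit[OF l, of 0] time_change_in_unit[OF l, of 1] by force+
qed

lemma time_changeI:
  assumes cont: "continuous_on {0..1} l"
    and mono: "\<And>s t. 0 \<le> s \<Longrightarrow> s < t \<Longrightarrow> t \<le> 1 \<Longrightarrow> l s < l t"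
    and l0: "l 0 = 0" and l1: "l 1 = 1"
  shows "l \<in> time_changes"
proof -
  have sm: "strict_mono_on {0..1} l" by (rule strict_mono_onI) (use mono in auto)
  have "l ` {0..1} \<subseteq> {0..1}"
  proof
    fix y assume "y \<in> l ` {0..1}"
    then obtain t where t: "t \<in> {0..1}" "y = l t" by blast
    then show "y \<in> {0..1}"
      using strict_mono_on_leD[OF sm, of 0 t] strict_mono_on_leD[OF sm, of t 1] l0 l1 by auto
  qed
  moreover have "{0..1} \<subseteq> l ` {0..1}"
  proof
    fix y :: real assume "y \<in> {0..1}"
    then obtain t where "0 \<le> t" "t \<le> 1" "l t = y" using IVT'[of l 0 y 1] cont l0 l1 by auto
    then show "y \<in> l ` {0..1}" by force
  qed
  ultimately have "bij_betw l {0..1} {0..1}"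
    using strict_mono_on_imp_inj_on[OF sm] by (simp add: bij_betw_def)
  then show ?thesis using cont sm unfolding time_changes_def by auto
qed

lemma time_change_id: "(\<lambda>t. t) \<in> time_changes"
  by (rule time_changeI) (auto intro: continuous_intros)

lemma time_change_comp:
  assumes l: "l \<in> time_changes" and m: "m \<in> time_changes"
  shows "(\<lambda>t. l (m t)) \<in> time_changes"
proof (rule time_changeI)
  show "continuous_on {0..1} (\<lambda>t. l (m t))"
    using time_change_in_unit[OF m]
    by (intro continuous_on_compose2[OF time_changesD(1)[OF l] time_changesD(1)[OF m]]) auto
  show "l (m s) < l (m t)" if "0 \<le> s" "s < t" "t \<le> 1" for s t
    using that time_change_less_iff[OF m, of s t] time_change_less_iff[OF l, of "m s" "m t"]
      time_change_in_unit[OF m, of s] time_change_in_unit[OF m, of t] by auto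
qed (simp_all add: time_change_0_1[OF l] time_change_0_1[OF m])

lemma time_change_inv_into:
  assumes l: "l \<in> time_changes"
  shows "inv_into {0..1} l \<in> time_changes"
proof (rule time_changeI)
  have b: "bij_betw l {0..1} {0..1}" using time_changesD(3)[OF l] .
  have "continuous_on (l ` {0..1}) (inv_into {0..1} l)"
    using time_changesD(1)[OF l] bij_betw_imp_inj_on[OF b] by (intro continuous_on_inv) auto
  then show "continuous_on {0..1} (inv_into {0..1} l)" using b by (simp add: bij_betw_def)
  show "inv_into {0..1} l s < inv_into {0..1} l t" if "0 \<le> s" "s < t" "t \<le> 1" for s t
    using that time_change_less_iff[OF l, of "inv_into {0..1} l s" "inv_into {0..1} l t"]
      bij_betw_inv_into_right[OF b, of s] bij_betw_inv_into_right[OF b, of t]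
      bij_betwE[OF bij_betw_inv_into[OF b]] by auto
  show "inv_into {0..1} l 0 = 0" "inv_into {0..1} l 1 = 1"
    using bij_betw_inv_into_left[OF b] time_change_0_1[OF l]
    by (metis atLeastAtMost_iff order_refl zero_le_one)+
qed

lemma time_change_at_right:
  assumes l: "l \<in> time_changes" and t: "0 \<le> t" "t < 1"
  shows "filterlim l (at_right (l t)) (at_right t)"
proof -
  have "(l \<longlongrightarrow> l t) (at_right t)"
    using continuous_on_Icc_at_rightD[OF continuous_on_subset[OF time_changesD(1)[OF l]] t(2)] t
    by auto
  moreover have "eventually (\<lambda>s. l s > l t) (at_right t)"
    unfolding eventually_at_right_field using t time_change_less_iff[OF l, of t]
    by (intro exI[of _ 1]) auto
  ultimately show ?thesis
    by (auto simp: filterlim_at elim: eventually_mono)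
qed

lemma time_change_at_left:
  assumes l: "l \<in> time_changes" and t: "0 < t" "t \<le> 1"
  shows "filterlim l (at_left (l t)) (at_left t)"
proof -
  have "(l \<longlongrightarrow> l t) (at_left t)"
    using continuous_on_Icc_at_leftD[OF continuous_on_subset[OF time_changesD(1)[OF l]] t(1)] t
    by auto
  moreover have "eventually (\<lambda>s. l s < l t) (at_left t)"
    unfolding eventually_at_left_field using t time_change_less_iff[OF l, of _ t]
    by (intro exI[of _ 0]) auto
  ultimately show ?thesis
    by (auto simp: filterlim_at elim: eventually_mono)
qed

lemma cadlag_comp_time_change:
  assumes x: "cadlag x" and l: "l \<in> time_changes"
  shows "cadlag (\<lambda>t. x (l t))"
  unfolding cadlag_def
proof safe
  fix t :: real assume t: "t \<in> {0..<1}"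
  then have "l t \<in> {0..<1}"
    using time_change_in_unit[OF l, of t] time_change_less_iff[OF l, of t 1] time_change_0_1[OF l] by auto
  then have "(x \<longlongrightarrow> x (l t)) (at_right (l t))" using x unfolding cadlag_def by auto
  from filterlim_compose[OF this time_change_at_right[OF l]] t
  show "((\<lambda>t. x (l t)) \<longlongrightarrow> x (l t)) (at_right t)" by auto
next
  fix t :: real assume t: "t \<in> {0<..1}"
  then have "l t \<in> {0<..1}"
    using time_change_in_unit[OF l, of t] time_change_less_iff[OF l, of 0 t] time_change_0_1[OF l] by auto
  then obtain L where "(x \<longlongrightarrow> L) (at_left (l t))" using x unfolding cadlag_def by blast
  from filterlim_compose[OF this time_change_at_left[OF l]] t
  show "\<exists>L. ((\<lambda>t. x (l t)) \<longlongrightarrow> L) (at_left t)" by auto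
qed

lemma equiv_Drel: "equiv Dspace Drel"
proof (rule equivI)
  show "Drel \<subseteq> Dspace \<times> Dspace" unfolding Drel_def by auto
  show "refl_on Dspace Drel"
    unfolding refl_on_def Drel_def using time_change_id by auto
  show "sym Drel"
  proof (rule symI)
    fix x y assume "(x, y) \<in> Drel"
    then obtain l where l: "l \<in> time_changes" "\<forall>t\<in>{0..1}. x (l t) = y t" "x \<in> Dspace" "y \<in> Dspace"
      unfolding Drel_def by auto
    have b: "bij_betw l {0..1} {0..1}" using time_changesD(3)[OF l(1)] .
    have "y (inv_into {0..1} l t) = x t" if "t \<in> {0..1}" for t
      using l(2) bij_betwE[OF bij_betw_inv_into[OF b]] bij_betw_inv_into_right[OF b] that by metis
    then show "(y, x) \<in> Drel"
      unfolding Drel_def using l(3,4) by (auto intro!: bexI[OF _ time_change_inv_into[OF l(1)]])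
  qed
  show "trans Drel"
  proof (rule transI)
    fix x y z assume "(x, y) \<in> Drel" "(y, z) \<in> Drel"
    then obtain l m where l: "l \<in> time_changes" "\<forall>t\<in>{0..1}. x (l t) = y t"
      and m: "m \<in> time_changes" "\<forall>t\<in>{0..1}. y (m t) = z t" and "x \<in> Dspace" "z \<in> Dspace"
      unfolding Drel_def by auto
    moreover have "\<forall>t\<in>{0..1}. x (l (m t)) = z t" using l(2) m(2) time_change_in_unit[OF m(1)] by auto
    ultimately show "(x, z) \<in> Drel"
      using time_change_comp[OF l(1) m(1)] unfolding Drel_def by auto
  qed
qed

lemma Dtilde_subset: "A \<in> Dtilde \<Longrightarrow> A \<subseteq> Dspace"
  unfolding Dtilde_def by (rule in_quotient_imp_subset[OF equiv_Drel])

lemma Dtilde_nonempty: "A \<in> Dtilde \<Longrightarrow> A \<noteq> {}"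
  unfolding Dtilde_def by (rule in_quotient_imp_non_empty[OF equiv_Drel])

section \<open>Step-function approximation of cadlag functions\<close>

lemma real_interval_induct:
  fixes a b :: real
  assumes "a \<le> b" "P a"
    and right: "\<And>s. a \<le> s \<Longrightarrow> s < b \<Longrightarrow> P s \<Longrightarrow> \<exists>c>s. \<forall>u. s < u \<and> u < c \<longrightarrow> P u"
    and left: "\<And>s. a < s \<Longrightarrow> s \<le> b \<Longrightarrow> (\<And>u. a \<le> u \<Longrightarrow> u < s \<Longrightarrow> P u) \<Longrightarrow> P s"
  shows "P b"
proof -
  define S where "S = {s\<in>{a..b}. \<forall>u\<in>{a..s}. P u}"
  define \<sigma> where "\<sigma> = Sup S"
  have "a \<in> S" using assms(1,2) by (auto simp: S_def)
  have bdd: "bdd_above S" unfolding S_def by (rule bdd_aboveI[of _ b]) auto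
  have "a \<le> \<sigma>" unfolding \<sigma>_def using \<open>a \<in> S\<close> bdd by (rule cSup_upper)
  have "\<sigma> \<le> b" unfolding \<sigma>_def by (rule cSup_least) (use \<open>a \<in> S\<close> in \<open>auto simp: S_def\<close>)
  note \<sigma> = \<open>a \<le> \<sigma>\<close> \<open>\<sigma> \<le> b\<close>
  have below: "P u" if "a \<le> u" "u < \<sigma>" for u
  proof -
    have "u < Sup S" using that(2) by (simp add: \<sigma>_def)
    then obtain s where "s \<in> S" "u < s" using less_cSupD[of S u] \<open>a \<in> S\<close> by blast
    then show ?thesis using that by (auto simp: S_def)
  qed
  have "P \<sigma>" using assms(2) left[OF _ \<sigma>(2) below] \<sigma>(1) by (cases "\<sigma> = a") auto
  then have "\<sigma> \<in> S" using below \<sigma> by (force simp: S_def)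
  have "\<sigma> = b"
  proof (rule ccontr)
    assume "\<sigma> \<noteq> b"
    then obtain c where c: "c > \<sigma>" "\<And>u. \<sigma> < u \<Longrightarrow> u < c \<Longrightarrow> P u"
      using right[OF \<sigma>(1) _ \<open>P \<sigma>\<close>] \<sigma>(2) by auto
    define u where "u = min ((\<sigma> + c) / 2) b"
    have "\<sigma> < u" using c(1) \<sigma>(2) \<open>\<sigma> \<noteq> b\<close> by (auto simp: u_def)
    have "u \<in> S"
      using \<open>\<sigma> \<in> S\<close> c \<open>\<sigma> < u\<close> \<sigma> unfolding S_def u_def
      by (auto simp: not_le intro: c(2))
    then show False using cSup_upper[OF _ bdd] \<open>\<sigma> < u\<close> unfolding \<sigma>_def by fastforce
  qed
  then show ?thesis using \<open>P \<sigma>\<close> by simp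
qed

definition approx_by_step :: "(real \<Rightarrow> 'a::real_normed_vector) \<Rightarrow> real \<Rightarrow> real \<Rightarrow> bool" where
  "approx_by_step x e b \<longleftrightarrow> (\<exists>P g. finite P \<and>
     (\<forall>s t. 0 \<le> s \<longrightarrow> s \<le> t \<longrightarrow> t \<le> b \<longrightarrow> P \<inter> {s<..t} = {} \<longrightarrow> g s = g t) \<and>
     (\<forall>t\<in>{0..b}. norm (x t - g t) < e))"

lemma approx_by_step_right:
  assumes x: "cadlag x" and s: "0 \<le> s" "s < 1" and e: "e > 0" and "approx_by_step x e s"
  shows "\<exists>c>s. \<forall>u. s < u \<and> u < c \<longrightarrow> approx_by_step x e u"
proof -
  obtain P g where P: "finite P"
    and cells: "\<And>t1 t2. 0 \<le> t1 \<Longrightarrow> t1 \<le> t2 \<Longrightarrow> t2 \<le> s \<Longrightarrow> P \<inter> {t1<..t2} = {} \<Longrightarrow> g t1 = g t2"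
    and close: "\<And>t. t \<in> {0..s} \<Longrightarrow> norm (x t - g t) < e"
    using \<open>approx_by_step x e s\<close> unfolding approx_by_step_def by blast
  have "(x \<longlongrightarrow> x s) (at_right s)" using x s unfolding cadlag_def by auto
  then have "eventually (\<lambda>y. dist (x y) (x s) < e) (at_right s)" using e by (rule tendstoD)
  then obtain c where c: "c > s" "\<And>y. s < y \<Longrightarrow> y < c \<Longrightarrow> norm (x y - x s) < e"
    unfolding eventually_at_right_field by (auto simp: dist_norm)
  define g' where "g' t = (if t < s then g t else x s)" for t
  have "approx_by_step x e u" if "s < u" "u < c" for u
    unfolding approx_by_step_def
  proof (intro exI[of _ "insert s P"] exI[of _ g'] conjI allI impI ballI)
    show "finite (insert s P)" using P by simp
    show "g' t1 = g' t2"
      if "0 \<le> t1" "t1 \<le> t2" "t2 \<le> u" "insert s P \<inter> {t1<..t2} = {}" for t1 t2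
      using that cells[of t1 t2] by (auto simp: g'_def)
    show "norm (x t - g' t) < e" if "t \<in> {0..u}" for t
      using that close[of t] c(2)[of t] \<open>s < u\<close> \<open>u < c\<close> e by (cases "s < t") (auto simp: g'_def)
  qed
  then show ?thesis using c(1) by blast
qed

lemma approx_by_step_left:
  assumes x: "cadlag x" and s: "0 < s" "s \<le> 1" and e: "e > 0"
    and below: "\<And>u. 0 \<le> u \<Longrightarrow> u < s \<Longrightarrow> approx_by_step x e u"
  shows "approx_by_step x e s"
proof -
  obtain L where "(x \<longlongrightarrow> L) (at_left s)" using x s unfolding cadlag_def by fastforce
  then have "eventually (\<lambda>y. dist (x y) L < e) (at_left s)" using e by (rule tendstoD)
  then obtain a where a: "a < s" "\<And>y. a < y \<Longrightarrow> y < s \<Longrightarrow> norm (x y - L) < e"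
    unfolding eventually_at_left_field by (auto simp: dist_norm)
  define u where "u = max ((a + s) / 2) (s / 2)"
  have u: "0 \<le> u" "a < u" "u < s" using a s by (auto simp: u_def less_max_iff_disj)
  obtain P g where P: "finite P"
    and cells: "\<And>t1 t2. 0 \<le> t1 \<Longrightarrow> t1 \<le> t2 \<Longrightarrow> t2 \<le> u \<Longrightarrow> P \<inter> {t1<..t2} = {} \<Longrightarrow> g t1 = g t2"
    and close: "\<And>t. t \<in> {0..u} \<Longrightarrow> norm (x t - g t) < e"
    using below[OF u(1,3)] unfolding approx_by_step_def by blast
  define g' where "g' t = (if t < u then g t else if t < s then L else x s)" for t
  show ?thesis
    unfolding approx_by_step_def
  proof (intro exI[of _ "insert u (insert s P)"] exI[of _ g'] conjI allI impI ballI)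
    show "finite (insert u (insert s P))" using P by simp
    show "g' t1 = g' t2"
      if "0 \<le> t1" "t1 \<le> t2" "t2 \<le> s" "insert u (insert s P) \<inter> {t1<..t2} = {}" for t1 t2
    proof -
      have "u \<notin> {t1<..t2}" "s \<notin> {t1<..t2}" using that(4) by auto
      then consider "t2 < u" | "u \<le> t1" "t2 < s" | "s \<le> t1"
        using that(2,3) by fastforce
      then show ?thesis
        by cases (use that cells[of t1 t2] u in \<open>auto simp: g'_def\<close>)
    qed
    show "norm (x t - g' t) < e" if "t \<in> {0..s}" for t
      using that close[of t] a(2)[of t] u e by (auto simp: g'_def)
  qed
qed

lemma cadlag_approx_by_step:
  assumes x: "cadlag x" and e: "e > 0"
  shows "approx_by_step x e 1"
proof (rule real_interval_induct[where P = "approx_by_step x e"])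
  show "approx_by_step x e 0"
    unfolding approx_by_step_def using e by (intro exI[of _ "{}"] exI[of _ "\<lambda>_. x 0"]) auto
qed (use approx_by_step_right[OF x _ _ e] approx_by_step_left[OF x _ _ e] in auto)

lemma cadlag_step_approx:
  assumes x: "cadlag x" and e: "e > 0"
  shows "\<exists>P w. finite P \<and> P \<subseteq> {0<..1} \<and> (\<forall>t\<in>{0..1}. norm (x t - w (card {p\<in>P. p \<le> t})) < e)"
proof -
  obtain P0 g where "finite P0"
    and cells: "\<And>s t. 0 \<le> s \<Longrightarrow> s \<le> t \<Longrightarrow> t \<le> 1 \<Longrightarrow> P0 \<inter> {s<..t} = {} \<Longrightarrow> g s = g t"
    and close: "\<And>t. t \<in> {0..1} \<Longrightarrow> norm (x t - g t) < e"
    using cadlag_approx_by_step[OF x e] unfolding approx_by_step_def by blast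
  define P where "P = P0 \<inter> {0<..1}"
  define c where "c t = card {p\<in>P. p \<le> t}" for t
  have "finite P" using \<open>finite P0\<close> by (simp add: P_def)
  have same_count: "g s = g t" if "0 \<le> s" "s \<le> t" "t \<le> 1" "c s = c t" for s t
  proof -
    have eq: "{p\<in>P. p \<le> s} = {p\<in>P. p \<le> t}"
      by (rule card_subset_eq) (use that \<open>finite P\<close> in \<open>auto simp: c_def\<close>)
    have "p \<notin> P0" if "s < p" "p \<le> t" for p
    proof
      assume "p \<in> P0"
      then have "p \<in> {p\<in>P. p \<le> t}" using that \<open>0 \<le> s\<close> \<open>t \<le> 1\<close> by (simp add: P_def)
      then show False using that(1) unfolding eq[symmetric] by simp
    qed
    then have "P0 \<inter> {s<..t} = {}" by auto
    then show ?thesis using cells that by blast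
  qed
  define w where "w k = g (SOME t. t \<in> {0..1} \<and> c t = k)" for k
  have "w (c t) = g t" if t: "t \<in> {0..1}" for t
  proof -
    define t' where "t' = (SOME t'. t' \<in> {0..1} \<and> c t' = c t)"
    have t': "t' \<in> {0..1} \<and> c t' = c t" unfolding t'_def by (rule someI[of _ t]) (use t in simp)
    have "g t' = g t"
    proof (cases "t' \<le> t")
      case True
      then show ?thesis using same_count[of t' t] t t' by simp
    next
      case False
      then show ?thesis using same_count[of t t'] t t' by simp
    qed
    then show ?thesis by (simp add: w_def t'_def)
  qed
  then have "\<forall>t\<in>{0..1}. norm (x t - w (c t)) < e" using close by simp
  then show ?thesis using \<open>finite P\<close> unfolding c_def P_def by blast
qed

lemma cadlag_bounded:
  assumes x: "cadlag x"
  shows "bounded (x ` {0..1})"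
proof -
  obtain P w where P: "finite P" and close: "\<forall>t\<in>{0..1}. norm (x t - w (card {p\<in>P. p \<le> t})) < 1"
    using cadlag_step_approx[OF x, of 1] by auto
  have "norm (x t) \<le> (\<Sum>k\<le>card P. norm (w k)) + 1" if t: "t \<in> {0..1}" for t
  proof -
    define k where "k = card {p\<in>P. p \<le> t}"
    have "norm (w k) \<le> (\<Sum>k\<le>card P. norm (w k))"
      using P by (intro member_le_sum) (auto simp: k_def intro: card_mono)
    moreover have "norm (x t) \<le> norm (w k) + norm (x t - w k)" by (rule norm_triangle_sub)
    ultimately show ?thesis using close t by (fastforce simp: k_def)
  qed
  then show ?thesis unfolding bounded_iff by blast
qed

definition step_fun :: "real set \<Rightarrow> 'a list \<Rightarrow> real \<Rightarrow> 'a" where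
  "step_fun Q vs t = vs ! card {q\<in>Q. q \<le> t}"

lemma eventually_at_right_count_const:
  fixes Q :: "real set"
  assumes "finite Q"
  shows "eventually (\<lambda>s. {q\<in>Q. q \<le> s} = {q\<in>Q. q \<le> t}) (at_right t)"
proof -
  obtain d where "d > 0" "\<forall>q\<in>Q. q \<noteq> t \<longrightarrow> d \<le> dist t q"
    using finite_set_avoid[OF assms] by blast
  then show ?thesis
    unfolding eventually_at_right_field
    by (intro exI[of _ "t + d"]) (force simp: dist_real_def)
qed

lemma eventually_at_left_count_const:
  fixes Q :: "real set"
  assumes "finite Q"
  shows "eventually (\<lambda>s. {q\<in>Q. q \<le> s} = {q\<in>Q. q < t}) (at_left t)"
proof -
  obtain d where "d > 0" "\<forall>q\<in>Q. q \<noteq> t \<longrightarrow> d \<le> dist t q"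
    using finite_set_avoid[OF assms] by blast
  then show ?thesis
    unfolding eventually_at_left_field
    by (intro exI[of _ "t - d"]) (force simp: dist_real_def)
qed

lemma cadlag_step_fun:
  assumes "finite Q"
  shows "cadlag (step_fun Q vs)"
  unfolding cadlag_def
proof safe
  fix t :: real
  have "eventually (\<lambda>s. step_fun Q vs s = step_fun Q vs t) (at_right t)"
    using eventually_at_right_count_const[OF assms] by (rule eventually_mono) (simp add: step_fun_def)
  then show "(step_fun Q vs \<longlongrightarrow> step_fun Q vs t) (at_right t)"
    by (rule tendsto_eventually)
  have "eventually (\<lambda>s. step_fun Q vs s = vs ! card {q\<in>Q. q < t}) (at_left t)"
    using eventually_at_left_count_const[OF assms] by (rule eventually_mono) (simp add: step_fun_def)
  then show "\<exists>L. (step_fun Q vs \<longlongrightarrow> L) (at_left t)"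
    using tendsto_eventually by blast
qed

lemma bdd_above_norm_diff_time_change:
  assumes y: "y \<in> Dspace" and z: "z \<in> Dspace" and l: "l \<in> time_changes"
  shows "bdd_above ((\<lambda>t. norm (y (l t) - z t)) ` {0..1})"
proof -
  obtain By Bz where By: "\<forall>t\<in>{0..1}. norm (y t) \<le> By" and Bz: "\<forall>t\<in>{0..1}. norm (z t) \<le> Bz"
    using cadlag_bounded y z unfolding Dspace_def bounded_iff by fastforce
  show ?thesis
  proof (rule bdd_aboveI2)
    fix t :: real assume t: "t \<in> {0..1}"
    have "norm (y (l t) - z t) \<le> norm (y (l t)) + norm (z t)" by (rule norm_triangle_ineq4)
    also have "\<dots> \<le> By + Bz" using By Bz t time_change_in_unit[OF l t] by (intro add_mono) auto
    finally show "norm (y (l t) - z t) \<le> By + Bz" .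
  qed
qed

lemma sup_norm_diff_time_change_nonneg:
  assumes "y \<in> Dspace" "z \<in> Dspace" "l \<in> time_changes"
  shows "0 \<le> (SUP t\<in>{0..1}. norm (y (l t) - z t))"
proof -
  have "norm (y (l 0) - z 0) \<le> (SUP t\<in>{0..1}. norm (y (l t) - z t))"
    by (rule cSUP_upper[OF _ bdd_above_norm_diff_time_change[OF assms]]) simp
  then show ?thesis using norm_ge_zero order_trans by blast
qed

lemma dD_nonneg: "y \<in> Dspace \<Longrightarrow> z \<in> Dspace \<Longrightarrow> 0 \<le> dD y z"
  unfolding dD_def using time_change_id sup_norm_diff_time_change_nonneg
  by (intro cInf_greatest) auto

lemma dD_le_time_change:
  assumes y: "y \<in> Dspace" and z: "z \<in> Dspace" and l: "l \<in> time_changes"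
    and c: "\<And>t. t \<in> {0..1} \<Longrightarrow> norm (y (l t) - z t) \<le> c"
  shows "dD y z \<le> c"
proof -
  let ?sup = "\<lambda>l. SUP t\<in>{0..1}. norm (y (l t) - z t)"
  have "dD y z \<le> ?sup l"
    unfolding dD_def
  proof (rule cInf_lower)
    show "?sup l \<in> ?sup ` time_changes" using l by blast
    show "bdd_below (?sup ` time_changes)"
      using sup_norm_diff_time_change_nonneg[OF y z] by (intro bdd_belowI2) auto
  qed
  also have "\<dots> \<le> c" by (rule cSUP_least) (use c in auto)
  finally show ?thesis .
qed

lemma dD_nonneg_Dtilde:
  assumes "A \<in> Dtilde" "B \<in> Dtilde" "d \<in> {dD x y |x y. x \<in> A \<and> y \<in> B}"
  shows "0 \<le> d"
proof -
  obtain x y where "d = dD x y" "x \<in> A" "y \<in> B" using assms(3) by blast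
  then show ?thesis using dD_nonneg[of x y] Dtilde_subset[OF assms(1)] Dtilde_subset[OF assms(2)] by auto
qed

lemma dDtilde_le_dD:
  assumes A: "A \<in> Dtilde" and B: "B \<in> Dtilde" and "y \<in> A" "z \<in> B"
  shows "dDtilde A B \<le> dD y z"
  unfolding dDtilde_def
proof (rule cInf_lower)
  show "dD y z \<in> {dD x y |x y. x \<in> A \<and> y \<in> B}" using assms by auto
  show "bdd_below {dD x y |x y. x \<in> A \<and> y \<in> B}"
    using dD_nonneg_Dtilde[OF A B] by (rule bdd_belowI)
qed

lemma dDtilde_nonneg:
  assumes A: "A \<in> Dtilde" and B: "B \<in> Dtilde"
  shows "0 \<le> dDtilde A B"
  unfolding dDtilde_def
proof (rule cInf_greatest)
  show "{dD x y |x y. x \<in> A \<and> y \<in> B} \<noteq> {}"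
    using Dtilde_nonempty[OF A] Dtilde_nonempty[OF B] by auto
  show "\<And>d. d \<in> {dD x y |x y. x \<in> A \<and> y \<in> B} \<Longrightarrow> 0 \<le> d"
    by (rule dD_nonneg_Dtilde[OF A B])
qed

text \<open>Classes are closed under time changes, so the time change realising the distance can be
  moved onto the representative of \<open>B\<close>; hence the representative of \<open>A\<close> may be fixed beforehand.\<close>
lemma dDtilde_less_imp_close:
  assumes A: "A \<in> Dtilde" and B: "B \<in> Dtilde" and y: "y \<in> A" and less: "dDtilde A B < e"
  shows "\<exists>z\<in>B. \<forall>t\<in>{0..1}. norm (y t - z t) < e"
proof -
  have "{dD x y |x y. x \<in> A \<and> y \<in> B} \<noteq> {}"
    using Dtilde_nonempty[OF A] Dtilde_nonempty[OF B] by auto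
  from cInf_lessD[OF this less[unfolded dDtilde_def]]
  obtain d where "d \<in> {dD x y |x y. x \<in> A \<and> y \<in> B}" "d < e" by blast
  then obtain y' z' where y': "y' \<in> A" and z': "z' \<in> B" and "dD y' z' < e" by blast
  have y'D: "y' \<in> Dspace" and z'D: "z' \<in> Dspace" using y' z' Dtilde_subset A B by auto
  have "(\<lambda>l. SUP t\<in>{0..1}. norm (y' (l t) - z' t)) ` time_changes \<noteq> {}"
    using time_change_id by blast
  from cInf_lessD[OF this \<open>dD y' z' < e\<close>[unfolded dD_def]]
  obtain l where l: "l \<in> time_changes" and sup_less: "(SUP t\<in>{0..1}. norm (y' (l t) - z' t)) < e"
    by blast
  have close: "norm (y' (l u) - z' u) < e" if "u \<in> {0..1}" for u
    using cSUP_upper[OF that bdd_above_norm_diff_time_change[OF y'D z'D l]] sup_less by linarith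
  have "(y', y) \<in> Drel"
    using in_quotient_imp_in_rel[OF equiv_Drel, of A y' y] A y y' unfolding Dtilde_def by simp
  then obtain \<mu> where \<mu>: "\<mu> \<in> time_changes" "\<And>t. t \<in> {0..1} \<Longrightarrow> y' (\<mu> t) = y t"
    unfolding Drel_def by auto
  define m where "m t = inv_into {0..1} l (\<mu> t)" for t
  have m: "m \<in> time_changes"
    unfolding m_def by (rule time_change_comp[OF time_change_inv_into[OF l] \<mu>(1)])
  define z where "z t = z' (m t)" for t
  have "z \<in> Dspace" using cadlag_comp_time_change[OF _ m] z'D unfolding Dspace_def z_def by auto
  then have "(z', z) \<in> Drel" unfolding Drel_def using z'D m by (auto simp: z_def)
  then have "z \<in> B" using in_quotient_imp_closed[OF equiv_Drel, of B z' z] B z' unfolding Dtilde_def by simp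
  moreover have "norm (y t - z t) < e" if t: "t \<in> {0..1}" for t
  proof -
    have b: "bij_betw l {0..1} {0..1}" using time_changesD(3)[OF l] .
    have "\<mu> t \<in> {0..1}" using time_change_in_unit[OF \<mu>(1) t] .
    then have "m t \<in> {0..1}" "l (m t) = \<mu> t"
      unfolding m_def using bij_betwE[OF bij_betw_inv_into[OF b]] bij_betw_inv_into_right[OF b] by auto
    then show ?thesis using close[of "m t"] \<mu>(2)[OF t] by (simp add: z_def)
  qed
  ultimately show ?thesis by blast
qed

section \<open>Separability\<close>

lemma time_change_moving_point:
  assumes "0 \<le> a - \<delta>" "a + \<delta> \<le> 1" "\<bar>r - a\<bar> < \<delta>"
  shows "\<exists>m\<in>time_changes. m a = r \<and> (\<forall>t. \<delta> \<le> \<bar>t - a\<bar> \<longrightarrow> m t = t)"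
proof -
  define h where "h t = max 0 (1 - \<bar>t - a\<bar> / \<delta>)" for t
  define m where "m t = t + (r - a) * h t" for t
  have \<delta>: "\<delta> > 0" using assms(3) by linarith
  have h_lipschitz: "\<bar>h t - h s\<bar> \<le> \<bar>t - s\<bar> / \<delta>" for s t
  proof -
    have "\<bar>h t - h s\<bar> \<le> \<bar>\<bar>t - a\<bar> / \<delta> - \<bar>s - a\<bar> / \<delta>\<bar>" unfolding h_def by linarith
    also have "\<dots> = \<bar>\<bar>t - a\<bar> - \<bar>s - a\<bar>\<bar> / \<delta>" using \<delta> by (simp add: diff_divide_distrib[symmetric])
    also have "\<dots> \<le> \<bar>t - s\<bar> / \<delta>" using \<delta> by (intro divide_right_mono) auto
    finally show ?thesis .
  qed
  have h_outside: "h t = 0" if "\<delta> \<le> \<bar>t - a\<bar>" for t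
    using that \<delta> by (simp add: h_def)
  \<comment> \<open>the tent \<open>h\<close> has slope \<open>1/\<delta>\<close>, so the perturbation \<open>(r - a) * h\<close> has slope below 1\<close>
  have "m s < m t" if "s < t" for s t
  proof -
    have "\<bar>(r - a) * (h t - h s)\<bar> = \<bar>r - a\<bar> * \<bar>h t - h s\<bar>" by (simp add: abs_mult)
    also have "\<dots> \<le> \<bar>r - a\<bar> * ((t - s) / \<delta>)"
      using h_lipschitz[of t s] that by (intro mult_left_mono) auto
    also have "\<dots> < \<delta> * ((t - s) / \<delta>)"
      using assms(3) that \<delta> by (intro mult_strict_right_mono) auto
    also have "\<dots> = t - s" using \<delta> by simp
    finally show ?thesis unfolding m_def by (simp add: algebra_simps abs_less_iff)
  qed
  moreover have "continuous_on {0..1} m"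
    unfolding m_def h_def using \<delta> by (intro continuous_intros) auto
  ultimately have "m \<in> time_changes"
    using h_outside[of 0] h_outside[of 1] assms by (intro time_changeI) (auto simp: m_def)
  moreover have "m a = r" using \<delta> by (simp add: m_def h_def)
  moreover have "m t = t" if "\<delta> \<le> \<bar>t - a\<bar>" for t using h_outside[OF that] by (simp add: m_def)
  ultimately show ?thesis by blast
qed

lemma time_change_to_rationals:
  assumes "finite P" "P \<subseteq> {0<..1}"
  shows "\<exists>l\<in>time_changes. l ` P \<subseteq> \<rat>"
  using assms
proof (induction P rule: finite_induct)
  case empty
  then show ?case using time_change_id by auto
next
  case (insert p F)
  then obtain l where l: "l \<in> time_changes" "l ` F \<subseteq> \<rat>" by auto
  show ?case
  proof (cases "l p \<in> \<rat>")
    case True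
    then show ?thesis using l by auto
  next
    case False
    define a where "a = l p"
    have "a \<noteq> 1" using False by (auto simp: a_def)
    then have "0 < a" "a < 1"
      using insert.prems time_change_less_iff[OF l(1), of 0 p] time_change_0_1[OF l(1)]
        time_change_in_unit[OF l(1), of p] by (auto simp: a_def)
    obtain \<delta>0 where \<delta>0: "\<delta>0 > 0" "\<forall>y\<in>l ` F. y \<noteq> a \<longrightarrow> \<delta>0 \<le> dist a y"
      using finite_set_avoid[of "l ` F" a] insert.hyps by auto
    define \<delta> where "\<delta> = min \<delta>0 (min a (1 - a))"
    have \<delta>: "\<delta> > 0" "0 \<le> a - \<delta>" "a + \<delta> \<le> 1" "\<delta> \<le> \<delta>0"
      using \<delta>0 \<open>0 < a\<close> \<open>a < 1\<close> by (auto simp: \<delta>_def)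
    obtain r where r: "r \<in> \<rat>" "a - \<delta> < r" "r < a + \<delta>"
      using Rats_dense_in_real[of "a - \<delta>" "a + \<delta>"] \<delta> by auto
    then obtain m where m: "m \<in> time_changes" "m a = r" "\<forall>t. \<delta> \<le> \<bar>t - a\<bar> \<longrightarrow> m t = t"
      using time_change_moving_point[of a \<delta> r] \<delta> by (auto simp: abs_less_iff)
    have "m (l f) = l f" if "f \<in> F" for f
    proof -
      have "l f \<noteq> a" using that l(2) False by (auto simp: a_def)
      then show ?thesis using m(3) \<delta>0(2) \<delta>(4) that by (auto simp: dist_real_def abs_minus_commute)
    qed
    then have "(\<lambda>t. m (l t)) ` insert p F \<subseteq> \<rat>"
      using l(2) m(2) r(1) by (auto simp: a_def)
    then show ?thesis using time_change_comp[OF m(1) l(1)] by blast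
  qed
qed

lemma cadlag_close_to_rational_step_fun:
  assumes x: "cadlag x" and e: "e > 0" and dense: "\<And>a. \<exists>d\<in>D. dist a d < e"
  shows "\<exists>Q vs l. finite Q \<and> Q \<subseteq> \<rat> \<and> vs \<in> lists D \<and> l \<in> time_changes \<and>
           (\<forall>t\<in>{0..1}. norm (step_fun Q vs (l t) - x t) < 2 * e)"
proof -
  obtain P w where P: "finite P" "P \<subseteq> {0<..1}"
    and close: "\<forall>t\<in>{0..1}. norm (x t - w (card {p\<in>P. p \<le> t})) < e"
    using cadlag_step_approx[OF x e] by blast
  obtain l where l: "l \<in> time_changes" "l ` P \<subseteq> \<rat>" using time_change_to_rationals[OF P] by blast
  have "\<forall>k. \<exists>c. c \<in> D \<and> dist (w k) c < e" using dense by blast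
  then obtain d where d: "\<And>k. d k \<in> D" "\<And>k. dist (w k) (d k) < e" by metis
  define vs where "vs = map d [0..<Suc (card P)]"
  have "inj_on l {0..1}" using strict_mono_on_imp_inj_on[OF time_changesD(2)[OF l(1)]] .
  then have inj: "inj_on l P" by (rule inj_on_subset) (use P(2) in auto)
  have "norm (step_fun (l ` P) vs (l t) - x t) < 2 * e" if t: "t \<in> {0..1}" for t
  proof -
    define k where "k = card {p\<in>P. p \<le> t}"
    have "{q\<in>l ` P. q \<le> l t} = l ` {p\<in>P. p \<le> t}"
      using time_change_le_iff[OF l(1) _ t] P(2) by fastforce
    then have "card {q\<in>l ` P. q \<le> l t} = k"
      unfolding k_def by (simp add: card_image inj_on_subset[OF inj])
    moreover have "k \<le> card P" unfolding k_def using P(1) by (intro card_mono) auto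
    ultimately have "step_fun (l ` P) vs (l t) = d k"
      by (simp add: step_fun_def vs_def del: upt_Suc)
    moreover have "norm (d k - x t) \<le> norm (d k - w k) + norm (w k - x t)"
      using norm_triangle_ineq[of "d k - w k" "w k - x t"] by simp
    moreover have "norm (d k - w k) < e" using d(2)[of k] by (simp add: dist_norm norm_minus_commute)
    moreover have "norm (w k - x t) < e" using close t by (simp add: k_def norm_minus_commute)
    ultimately show ?thesis by simp
  qed
  moreover have "finite (l ` P)" "vs \<in> lists D" using P(1) d(1) by (auto simp: vs_def)
  ultimately show ?thesis using l by blast
qed

lemma Dtilde_separable:
  "\<exists>S :: (real \<Rightarrow> 'a::{real_normed_vector, second_countable_topology}) set set.
     countable S \<and> S \<subseteq> Dtilde \<and> (\<forall>A\<in>Dtilde. \<forall>e>0. \<exists>B\<in>S. dDtilde B A < e)"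
proof -
  obtain D :: "'a set" where "countable D" and D: "\<And>X. open X \<Longrightarrow> X \<noteq> {} \<Longrightarrow> \<exists>d\<in>D. d \<in> X"
    using countable_dense_setE by blast
  define S where "S = (\<lambda>(Q, vs). Drel `` {step_fun Q vs}) ` ({Q. finite Q \<and> Q \<subseteq> \<rat>} \<times> lists D)"
  have "countable S"
    unfolding S_def using countable_Collect_finite_subset[OF countable_rat] \<open>countable D\<close>
    by (intro countable_image countable_SIGMA) auto
  moreover have "S \<subseteq> Dtilde"
    unfolding S_def Dtilde_def using cadlag_step_fun by (auto simp: Dspace_def intro!: quotientI)
  moreover have "\<exists>B\<in>S. dDtilde B A < e" if A: "A \<in> Dtilde" and e: "e > 0" for A e
  proof -
    obtain x where x: "x \<in> Dspace" "A = Drel `` {x}" using A unfolding Dtilde_def by (rule quotientE)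
    have "\<exists>d\<in>D. dist a d < e / 3" for a using D[of "ball a (e / 3)"] e by auto
    then obtain Q vs l where Q: "finite Q" "Q \<subseteq> \<rat>" "vs \<in> lists D" and l: "l \<in> time_changes"
      and close: "\<forall>t\<in>{0..1}. norm (step_fun Q vs (l t) - x t) < 2 * (e / 3)"
      using cadlag_close_to_rational_step_fun[of x "e / 3" D] x(1) e unfolding Dspace_def by auto
    define B where "B = Drel `` {step_fun Q vs}"
    have sD: "step_fun Q vs \<in> Dspace" using cadlag_step_fun[OF Q(1)] by (simp add: Dspace_def)
    have "B \<in> S" using Q unfolding S_def B_def by auto
    have "dDtilde B A \<le> dD (step_fun Q vs) x"
      using \<open>B \<in> S\<close> \<open>S \<subseteq> Dtilde\<close> A equiv_class_self[OF equiv_Drel] sD x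
      unfolding B_def by (intro dDtilde_le_dD) auto
    also have "\<dots> \<le> 2 * (e / 3)"
      using close by (intro dD_le_time_change[OF sD x(1) l]) (auto intro: less_imp_le)
    finally show ?thesis using \<open>B \<in> S\<close> e by (intro bexI[of _ B]) auto
  qed
  ultimately show ?thesis by blast
qed

section \<open>Completeness\<close>

lemma uniform_limit_left_limit:
  fixes f :: "nat \<Rightarrow> real \<Rightarrow> 'a::banach"
  assumes "a < b" and unif: "uniform_limit {a..b} f F sequentially"
    and L: "\<And>n. (f n \<longlongrightarrow> L n) (at_left b)"
  shows "\<exists>l. (F \<longlongrightarrow> l) (at_left b)"
proof -
  have at: "at_left b = at b within {a..b}" using \<open>a < b\<close> by (simp add: at_within_Icc_at_left)
  have ev: "\<forall>\<^sub>F s in at_left b. s \<in> {a..b}"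
    unfolding eventually_at_left_field using \<open>a < b\<close> by (intro exI[of _ a]) auto
  have "Cauchy L"
  proof (rule metric_CauchyI)
    fix e :: real assume "e > 0"
    have "uniformly_Cauchy_on {a..b} f"
      using unif by (intro uniformly_convergent_Cauchy) (auto simp: uniformly_convergent_on_def)
    then obtain M
      where M: "\<And>s m n. s \<in> {a..b} \<Longrightarrow> M \<le> m \<Longrightarrow> M \<le> n \<Longrightarrow> dist (f m s) (f n s) < e / 2"
      using \<open>e > 0\<close> unfolding uniformly_Cauchy_on_def by (meson half_gt_zero)
    have "dist (L m) (L n) \<le> e / 2" if "M \<le> m" "M \<le> n" for m n
    proof (rule tendsto_upperbound)
      show "((\<lambda>s. dist (f m s) (f n s)) \<longlongrightarrow> dist (L m) (L n)) (at_left b)"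
        by (intro tendsto_dist L)
      show "\<forall>\<^sub>F s in at_left b. dist (f m s) (f n s) \<le> e / 2"
        using ev by eventually_elim (use M that in \<open>auto intro: less_imp_le\<close>)
    qed simp
    then show "\<exists>M. \<forall>m\<ge>M. \<forall>n\<ge>M. dist (L m) (L n) < e" using \<open>e > 0\<close> by force
  qed
  then obtain l where "L \<longlonglongrightarrow> l" using Cauchy_convergent_iff convergent_def by blast
  have "(F \<longlongrightarrow> l) (at b within {a..b})"
    by (rule swap_uniform_limit[OF _ \<open>L \<longlonglongrightarrow> l\<close> unif]) (use L in \<open>simp_all add: at\<close>)
  then show ?thesis unfolding at by blast
qed

lemma cadlag_uniform_limit:
  fixes f :: "nat \<Rightarrow> real \<Rightarrow> 'a::banach"
  assumes cadlag: "\<And>n. cadlag (f n)" and unif: "uniform_limit {0..1} f F sequentially"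
  shows "cadlag F"
  unfolding cadlag_def
proof safe
  fix t :: real assume t: "t \<in> {0..<1}"
  then have at: "at_right t = at t within {t..1}" by (simp add: at_within_Icc_at_right)
  show "(F \<longlongrightarrow> F t) (at_right t)"
    unfolding at
  proof (rule swap_uniform_limit)
    show "\<forall>\<^sub>F n in sequentially. (f n \<longlongrightarrow> f n t) (at t within {t..1})"
      using cadlag t unfolding cadlag_def at[symmetric] by simp
    show "((\<lambda>n. f n t) \<longlongrightarrow> F t) sequentially" using tendsto_uniform_limitI[OF unif] t by simp
    show "uniform_limit {t..1} f F sequentially" using t by (intro uniform_limit_on_subset[OF unif]) auto
  qed simp
next
  fix t :: real assume t: "t \<in> {0<..1}"
  have "\<forall>n. \<exists>L. (f n \<longlongrightarrow> L) (at_left t)" using cadlag t unfolding cadlag_def by simp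
  then obtain L where "\<And>n. (f n \<longlongrightarrow> L n) (at_left t)" by metis
  moreover have "uniform_limit {0..t} f F sequentially"
    using t by (intro uniform_limit_on_subset[OF unif]) auto
  ultimately show "\<exists>l. (F \<longlongrightarrow> l) (at_left t)" using t by (intro uniform_limit_left_limit) auto
qed

lemma uniform_limit_summable_increments:
  fixes y :: "nat \<Rightarrow> 'b \<Rightarrow> 'a::banach"
  assumes "\<And>k t. t \<in> S \<Longrightarrow> norm (y (Suc k) t - y k t) \<le> M k" and "summable M"
  shows "uniform_limit S y (\<lambda>t. y 0 t + (\<Sum>k. y (Suc k) t - y k t)) sequentially"
proof -
  have "uniform_limit S (\<lambda>n t. y 0 t + (\<Sum>k<n. y (Suc k) t - y k t))
          (\<lambda>t. y 0 t + (\<Sum>k. y (Suc k) t - y k t)) sequentially"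
    using assms by (intro uniform_limit_add[OF uniform_limit_const] Weierstrass_m_test)
  moreover have "y 0 t + (\<Sum>k<n. y (Suc k) t - y k t) = y n t" for n t
    using sum_lessThan_telescope[of "\<lambda>k. y k t" n] by simp
  ultimately show ?thesis by simp
qed

lemma Dtilde_Cauchy_representatives:
  fixes X :: "nat \<Rightarrow> (real \<Rightarrow> 'a::real_normed_vector) set"
  assumes X: "\<And>n. X n \<in> Dtilde" and Cauchy: "\<forall>e>0. \<exists>N. \<forall>m\<ge>N. \<forall>n\<ge>N. dDtilde (X m) (X n) < e"
  obtains N y where "\<And>k n. N k \<le> n \<Longrightarrow> dDtilde (X (N k)) (X n) < (1/2)^k"
    and "\<And>k. y k \<in> X (N k)"
    and "\<And>k t. t \<in> {0..1} \<Longrightarrow> norm (y (Suc k) t - y k t) \<le> (1/2)^k"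
proof -
  have "\<forall>k. \<exists>N. \<forall>m\<ge>N. \<forall>n\<ge>N. dDtilde (X m) (X n) < (1/2)^k" using Cauchy by simp
  then obtain N0 :: "nat \<Rightarrow> nat" where N0: "\<And>k m n. N0 k \<le> m \<Longrightarrow> N0 k \<le> n \<Longrightarrow> dDtilde (X m) (X n) < (1/2)^k"
    by metis
  define N where "N k = (\<Sum>i\<le>k. N0 i)" for k
  have "N0 k \<le> N k" for k unfolding N_def by (rule member_le_sum) auto
  moreover have "N k \<le> N (Suc k)" for k unfolding N_def by simp
  ultimately have tail: "dDtilde (X (N k)) (X n) < (1/2)^k" if "N k \<le> n" for k n
    using N0 that by (meson order_trans)
  have "\<exists>y. \<forall>k. y k \<in> X (N k) \<and> (\<forall>t\<in>{0..1}. norm (y k t - y (Suc k) t) < (1/2)^k)"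
  proof (rule dependent_nat_choice)
    show "\<exists>z. z \<in> X (N 0)" using Dtilde_nonempty[OF X] by blast
    show "\<exists>z'. z' \<in> X (N (Suc k)) \<and> (\<forall>t\<in>{0..1}. norm (z t - z' t) < (1/2)^k)"
      if "z \<in> X (N k)" for z k
      using dDtilde_less_imp_close[OF X X that tail[OF \<open>N k \<le> N (Suc k)\<close>]] by blast
  qed
  then obtain y where "\<And>k. y k \<in> X (N k)" "\<And>k t. t \<in> {0..1} \<Longrightarrow> norm (y k t - y (Suc k) t) < (1/2)^k"
    by blast
  then show ?thesis
    using that tail by (metis less_imp_le norm_minus_commute)
qed

lemma dDtilde_tendsto_class_of_uniform_limit:
  fixes X :: "nat \<Rightarrow> (real \<Rightarrow> 'a::real_normed_vector) set"
  assumes X: "\<And>n. X n \<in> Dtilde"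
    and tail: "\<And>k n. N k \<le> n \<Longrightarrow> dDtilde (X (N k)) (X n) < (1/2)^k"
    and y: "\<And>k. y k \<in> X (N k)" and unif: "uniform_limit {0..1} y Y sequentially"
    and A: "A \<in> Dtilde" "Y \<in> A"
  shows "(\<lambda>n. dDtilde (X n) A) \<longlonglongrightarrow> 0"
proof -
  have "\<exists>K. \<forall>n\<ge>K. dDtilde (X n) A < r" if "r > 0" for r
  proof -
    have "r / 2 > 0" using \<open>r > 0\<close> by simp
    have "\<forall>\<^sub>F k in sequentially. (1/2::real)^k < r / 2"
      using order_tendstoD(2)[OF LIMSEQ_power_zero \<open>r / 2 > 0\<close>, of "1/2"] by simp
    moreover have "\<forall>\<^sub>F k in sequentially. \<forall>t\<in>{0..1}. dist (y k t) (Y t) < r / 2"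
      using unif \<open>r / 2 > 0\<close> by (rule uniform_limitD)
    ultimately have "\<forall>\<^sub>F k in sequentially.
        (1/2::real)^k < r / 2 \<and> (\<forall>t\<in>{0..1}. dist (y k t) (Y t) < r / 2)"
      by (rule eventually_conj)
    then obtain k
      where k: "(1/2::real)^k < r / 2" "\<And>t. t \<in> {0..1} \<Longrightarrow> dist (y k t) (Y t) < r / 2"
      unfolding eventually_sequentially by blast
    have "dDtilde (X n) A < r" if n: "N k \<le> n" for n
    proof -
      obtain z where "z \<in> X n" and z: "\<forall>t\<in>{0..1}. norm (y k t - z t) < (1/2)^k"
        using dDtilde_less_imp_close[OF X X y tail[OF n]] by blast
      have "norm (z t - Y t) \<le> (1/2)^k + r / 2" if t: "t \<in> {0..1}" for t
      proof -
        have "norm (z t - Y t) \<le> norm (y k t - z t) + norm (y k t - Y t)"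
          using norm_triangle_ineq[of "z t - y k t" "y k t - Y t"] by (simp add: norm_minus_commute)
        moreover have "norm (y k t - z t) < (1/2)^k" using z t by blast
        ultimately show ?thesis using k(2)[OF t] by (simp add: dist_norm)
      qed
      then have "dD z Y \<le> (1/2)^k + r / 2"
        using \<open>z \<in> X n\<close> Dtilde_subset[OF X] Dtilde_subset[OF A(1)] A(2)
        by (intro dD_le_time_change[OF _ _ time_change_id]) auto
      then show ?thesis using dDtilde_le_dD[OF X A(1) \<open>z \<in> X n\<close> A(2)] k(1) by linarith
    qed
    then show ?thesis by blast
  qed
  then show ?thesis using dDtilde_nonneg[OF X A(1)] by (intro LIMSEQ_I) simp
qed

lemma Dtilde_complete:
  fixes X :: "nat \<Rightarrow> (real \<Rightarrow> 'a::banach) set"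
  assumes X: "\<And>n. X n \<in> Dtilde" and Cauchy: "\<forall>e>0. \<exists>N. \<forall>m\<ge>N. \<forall>n\<ge>N. dDtilde (X m) (X n) < e"
  shows "\<exists>A\<in>Dtilde. (\<lambda>n. dDtilde (X n) A) \<longlonglongrightarrow> 0"
proof -
  obtain N y where tail: "\<And>k n. N k \<le> n \<Longrightarrow> dDtilde (X (N k)) (X n) < (1/2)^k"
    and y: "\<And>k. y k \<in> X (N k)"
    and step: "\<And>k t. t \<in> {0..1} \<Longrightarrow> norm (y (Suc k) t - y k t) \<le> (1/2)^k"
    using Dtilde_Cauchy_representatives[OF X Cauchy] by blast
  define Y where "Y t = y 0 t + (\<Sum>k. y (Suc k) t - y k t)" for t
  have unif: "uniform_limit {0..1} y Y sequentially"
    unfolding Y_def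
    by (rule uniform_limit_summable_increments[where M = "\<lambda>k. (1/2)^k", OF step]) simp_all
  have "y k \<in> Dspace" for k using Dtilde_subset[OF X] y by blast
  then have "Y \<in> Dspace" using cadlag_uniform_limit[OF _ unif] by (simp add: Dspace_def)
  then have "Drel `` {Y} \<in> Dtilde" "Y \<in> Drel `` {Y}"
    using equiv_class_self[OF equiv_Drel] unfolding Dtilde_def by (auto intro: quotientI)
  then show ?thesis using dDtilde_tendsto_class_of_uniform_limit[of X N y Y, OF X tail y unif] by blast
qed

theorem lemmaA2:
  shows "(\<exists>S :: (real \<Rightarrow> real^'n) set set. countable S \<and> S \<subseteq> Dtilde \<and>
            (\<forall>A\<in>Dtilde. \<forall>e>0. \<exists>B\<in>S. dDtilde B A < e))
       \<and> (\<forall>X :: nat \<Rightarrow> (real \<Rightarrow> real^'n) set.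
            (\<forall>n. X n \<in> Dtilde) \<and>
            (\<forall>e>0. \<exists>N. \<forall>m\<ge>N. \<forall>n\<ge>N. dDtilde (X m) (X n) < e)
            \<longrightarrow> (\<exists>A\<in>Dtilde. (\<lambda>n. dDtilde (X n) A) \<longlonglongrightarrow> 0))"
proof (intro conjI allI impI)
  show "\<exists>S :: (real \<Rightarrow> real^'n) set set. countable S \<and> S \<subseteq> Dtilde \<and>
          (\<forall>A\<in>Dtilde. \<forall>e>0. \<exists>B\<in>S. dDtilde B A < e)"
    by (rule Dtilde_separable)
  fix X :: "nat \<Rightarrow> (real \<Rightarrow> real^'n) set"
  assume "(\<forall>n. X n \<in> Dtilde) \<and> (\<forall>e>0. \<exists>N. \<forall>m\<ge>N. \<forall>n\<ge>N. dDtilde (X m) (X n) < e)"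
  then show "\<exists>A\<in>Dtilde. (\<lambda>n. dDtilde (X n) A) \<longlonglongrightarrow> 0"
    using Dtilde_complete[of X] by blast
qed

end
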